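(* Let $f:U\to\Phi^c$ be $k$-odd and, for each $i\in[c]$, let $g_i:\Phi\to\Psi^d$ be $k$-odd. Define $F:U\to\Psi^{[c]\times[d]}$ by $F(x)_{(i,j)}=g_i(f(x)_i)_j$. Then $F$ is $k$-odd.
   Context: For a vector $y$ indexed by a set $J$, $y_j$ is its coordinate at $j\in J$. An output position character of a function $g:A\to B^J$ is a pair $(j,b)\in J\times B$. The function $g$ is $k$-odd if for every nonempty $X\subseteq A$ with $|X|\le k$ there is an output position character $(j,b)$ such that the number of $x\in X$ with $g(x)_j=b$ is odd. *)

theory Defs
  imports Main
begin

text \<open>A function g : A \<rightarrow> B^J is represented as g :: 'a \<Rightarrow> 'j \<Rightarrow> 'b,
  with domain A = UNIV :: 'a set and index set J given explicitly.
  g is k-odd if for every nonempty X \<subseteq> A with |X| \<le> k there is an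
  output position character (j,b) \<in> J \<times> B such that the number of
  x \<in> X with g x j = b is odd.\<close>

definition k_odd :: "nat \<Rightarrow> 'j set \<Rightarrow> ('a \<Rightarrow> 'j \<Rightarrow> 'b) \<Rightarrow> bool" where
  "k_odd k J g \<longleftrightarrow>
     (\<forall>X :: 'a set. finite X \<and> X \<noteq> {} \<and> card X \<le> k \<longrightarrow>
        (\<exists>j\<in>J. \<exists>b. odd (card {x\<in>X. g x j = b})))"

end

theory Submission
  imports Defs
begin

(* Fix a nonempty set X of at most k inputs. Since f is k-odd there is a
   coordinate i and a value phi occurring an odd number of times among the
   f x i, x in X. Let Y be the set of values of t = (\<lambda>x. f x i) on X whose
   fibre in X has odd size; then phi \<in> Y and card Y \<le> card X \<le> k, so the
   k-oddness of g i yields (j, psi) with an odd number of y \<in> Y satisfying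
   g i y j = psi. The number of x \<in> X with g i (t x) j = psi is the sum of
   the fibre sizes over all such values y, and a sum of naturals has the
   parity of its number of odd summands; hence that number is odd and
   ((i, j), psi) witnesses the k-oddness of the composite at X. *)

definition odd_values :: "('a \<Rightarrow> 'b) \<Rightarrow> 'a set \<Rightarrow> 'b set" where
  "odd_values t X = {y \<in> t ` X. odd (card {x\<in>X. t x = y})}"

lemma odd_fibre_in_odd_values:
  assumes "odd (card {x\<in>X. t x = y})"
  shows "y \<in> odd_values t X"
proof -
  have "{x\<in>X. t x = y} \<noteq> {}"
    using assms by (metis card.empty even_zero)
  then show ?thesis
    using assms unfolding odd_values_def by auto
qed

lemma odd_values_finite_card_le:
  assumes "finite X"
  shows "finite (odd_values t X)" and "card (odd_values t X) \<le> card X"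
proof -
  have sub: "odd_values t X \<subseteq> t ` X"
    unfolding odd_values_def by auto
  show "finite (odd_values t X)"
    using finite_subset[OF sub] assms by blast
  have "card (odd_values t X) \<le> card (t ` X)"
    using sub assms by (intro card_mono) auto
  also have "\<dots> \<le> card X"
    by (rule card_image_le[OF assms])
  finally show "card (odd_values t X) \<le> card X" .
qed

lemma card_preimage_sum_fibres:
  assumes "finite X"
  shows "card {x\<in>X. P (t x)} = (\<Sum>y\<in>{y\<in>t ` X. P y}. card {x\<in>X. t x = y})"
proof -
  have "{x\<in>X. P (t x)} = (\<Union>y\<in>{y\<in>t ` X. P y}. {x\<in>X. t x = y})"
    by auto
  also have "card \<dots> = (\<Sum>y\<in>{y\<in>t ` X. P y}. card {x\<in>X. t x = y})"
    by (rule card_UN_disjoint) (use assms in auto)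
  finally show ?thesis .
qed

text \<open>Key parity transfer: modulo 2, the number of points of \<open>X\<close> whose image
  satisfies \<open>P\<close> equals the number of odd values satisfying \<open>P\<close>, because
  fibres of even size do not contribute.\<close>

lemma odd_card_preimage_iff_odd_values:
  assumes "finite X"
  shows "odd (card {x\<in>X. P (t x)}) \<longleftrightarrow> odd (card {y\<in>odd_values t X. P y})"
proof -
  have "{y\<in>{y\<in>t ` X. P y}. odd (card {x\<in>X. t x = y})} = {y\<in>odd_values t X. P y}"
    unfolding odd_values_def by auto
  then show ?thesis
    using card_preimage_sum_fibres[OF assms, of P t]
      even_sum_iff[of "{y\<in>t ` X. P y}" "\<lambda>y. card {x\<in>X. t x = y}"] assms
    by simp
qed

theorem mainTheorem8:
  fixes k c d :: nat
    and f :: "'u \<Rightarrow> nat \<Rightarrow> 'phi"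
    and g :: "nat \<Rightarrow> 'phi \<Rightarrow> nat \<Rightarrow> 'psi"
  assumes "k_odd k {1..c} f"
    and "\<And>i. i \<in> {1..c} \<Longrightarrow> k_odd k {1..d} (g i)"
  shows "k_odd k ({1..c} \<times> {1..d}) (\<lambda>x (i, j). g i (f x i) j)"
  unfolding k_odd_def
proof (intro allI impI)
  fix X :: "'u set"
  assume X: "finite X \<and> X \<noteq> {} \<and> card X \<le> k"
  then obtain i phi where i: "i \<in> {1..c}" and phi: "odd (card {x\<in>X. f x i = phi})"
    using assms(1) unfolding k_odd_def by blast
  let ?Y = "odd_values (\<lambda>x. f x i) X"
  have "?Y \<noteq> {}"
    using odd_fibre_in_odd_values[OF phi] by blast
  moreover have "finite ?Y" and "card ?Y \<le> k"
    using odd_values_finite_card_le[of X "\<lambda>x. f x i"] X by auto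
  ultimately obtain j psi where j: "j \<in> {1..d}" and "odd (card {y\<in>?Y. g i y j = psi})"
    using assms(2)[OF i] unfolding k_odd_def by blast
  then have "odd (card {x\<in>X. g i (f x i) j = psi})"
    using odd_card_preimage_iff_odd_values[of X "\<lambda>y. g i y j = psi" "\<lambda>x. f x i"] X by simp
  then show "\<exists>p\<in>{1..c} \<times> {1..d}. \<exists>b. odd (card {x\<in>X. (\<lambda>x (i, j). g i (f x i) j) x p = b})"
    using i j by fastforce
qed

end
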